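(* Let $\Bbbk$ be a field, $X$ the generic symmetric $n\times n$ matrix, and for $i=1,\dots,n$ let $d_i$ be the determinant of the $i\times i$ submatrix of $X$ in the bottom-left corner (rows $n-i+1,\dots,n$ and columns $1,\dots,i$). Put $\mathfrak{D}=d_1d_2\cdots d_n\in\Bbbk[X]$. With respect to the lexicographic monomial order on $\Bbbk[X]$ induced by the variable order $x_{11}>x_{12}>\cdots>x_{1n}>x_{22}>x_{23}>\cdots>x_{2n}>\cdots>x_{n-1,n}>x_{nn}$ (i.e. $x_{ij}>x_{kl}$ iff $(i,j)$ precedes $(k,l)$ lexicographically, $i\le j$, $k\le l$), the leading term of $\mathfrak{D}$ is $\prod_{1\le i\le j\le n}x_{ij}$. In particular, if $\operatorname{char}\Bbbk=p>0$, then $\mathfrak{D}^{p-1}\notin\mathfrak{m}_S^{[p]}$, where $\mathfrak{m}_S=(x_{ij}\mid 1\le i\le j\le n)$.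
   Context: $X=(x_{ij})$ is the symmetric $n\times n$ matrix whose entries are independent indeterminates subject only to $x_{ij}=x_{ji}$; $S=\Bbbk[X]=\Bbbk[x_{ij}\mid 1\le i\le j\le n]$. For an ideal $J$ in characteristic $p$, $J^{[p]}$ denotes the ideal generated by $p$-th powers of elements of $J$. *)

theory Defs
  imports "HOL-Library.Poly_Mapping" "HOL-Library.Product_Lexorder" "Jordan_Normal_Form.Determinant"
begin

type_synonym 'k mpoly = "((nat \<times> nat) \<Rightarrow>\<^sub>0 nat) \<Rightarrow>\<^sub>0 'k"

definition var :: "nat \<Rightarrow> nat \<Rightarrow> 'k::comm_ring_1 mpoly" where
  "var i j = Poly_Mapping.single (Poly_Mapping.single (i, j) 1) 1"

definition symX :: "nat \<Rightarrow> nat \<Rightarrow> 'k::comm_ring_1 mpoly" where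
  "symX r c = var (min r c) (max r c)"

text \<open>d_i: determinant of the i x i submatrix in the bottom-left corner:
  rows n-i+1..n, columns 1..i (0-based matrix index a,b corresponds to row n-i+1+a, column 1+b).\<close>
definition dminor :: "nat \<Rightarrow> nat \<Rightarrow> 'k::comm_ring_1 mpoly" where
  "dminor n i = det (mat i i (\<lambda>(a, b). symX (n - i + 1 + a) (1 + b)))"

definition frakD :: "nat \<Rightarrow> 'k::comm_ring_1 mpoly" where
  "frakD n = (\<Prod>i = 1..n. dminor n i)"

text \<open>Lex monomial order: x_(i,j) > x_(k,l) iff (i,j) < (k,l) lexicographically.\<close>
definition lex_gr :: "((nat \<times> nat) \<Rightarrow>\<^sub>0 nat) \<Rightarrow> ((nat \<times> nat) \<Rightarrow>\<^sub>0 nat) \<Rightarrow> bool" where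
  "lex_gr a b \<longleftrightarrow> (\<exists>v. Poly_Mapping.lookup a v > Poly_Mapping.lookup b v \<and> (\<forall>w. w < v \<longrightarrow> Poly_Mapping.lookup a w = Poly_Mapping.lookup b w))"

definition lead_monom :: "'k::zero mpoly \<Rightarrow> ((nat \<times> nat) \<Rightarrow>\<^sub>0 nat)" where
  "lead_monom f = (THE m. m \<in> Poly_Mapping.keys f \<and> (\<forall>m' \<in> Poly_Mapping.keys f. m' \<noteq> m \<longrightarrow> lex_gr m m'))"

definition lead_term :: "'k::zero mpoly \<Rightarrow> 'k mpoly" where
  "lead_term f = Poly_Mapping.single (lead_monom f) (Poly_Mapping.lookup f (lead_monom f))"

definition ideal_gen :: "'a::comm_ring_1 set \<Rightarrow> 'a set" where
  "ideal_gen A = module.span ((*)) A"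

definition frob_pow :: "'a::comm_ring_1 set \<Rightarrow> nat \<Rightarrow> 'a set" where
  "frob_pow J p = ideal_gen {f ^ p | f. f \<in> J}"

definition max_ideal :: "nat \<Rightarrow> 'k::comm_ring_1 mpoly set" where
  "max_ideal n = ideal_gen {var i j | i j. 1 \<le> i \<and> i \<le> j \<and> j \<le> n}"

end

theory Submission
  imports Defs "HOL-Computational_Algebra.Primes"
begin

text \<open>The minor \<open>d\<^sub>i\<close> is a signed sum over the permutations of its index set, and the
  identity contributes the diagonal monomial, which is the lex-largest one: if a permutation
  first moves the index \<open>a\<close>, the diagonal entry in position \<open>(a, a)\<close> is the largest variable
  of the block of rows and columns \<open>\<ge> a\<close>; the identity uses it, the permutation does not,
  and both agree on all larger variables. Leading terms multiply, and the diagonals of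
  \<open>d\<^sub>1, \<dots>, d\<^sub>n\<close> partition the upper triangle \<open>{(i, j). i \<le> j}\<close>, so the leading term of
  \<open>D\<close> is the product of all variables, with coefficient \<open>1\<close>.
  In characteristic \<open>p\<close> the Frobenius map is additive, so every element of \<open>m\<^sup>[\<^sup>p\<^sup>]\<close>
  involves only monomials with some exponent \<open>\<ge> p\<close>, whereas \<open>D\<^sup>p\<^sup>-\<^sup>1\<close> contains the
  monomial \<open>(\<Prod> x\<^sub>i\<^sub>j)\<^sup>p\<^sup>-\<^sup>1\<close>.\<close>

lemma lex_gr_irrefl: "\<not> lex_gr a a"
  by (auto simp: lex_gr_def)

lemma lex_gr_asym: "lex_gr a b \<Longrightarrow> \<not> lex_gr b a"
  unfolding lex_gr_def by (metis less_asym linorder_neqE)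

lemma lex_gr_trans:
  assumes "lex_gr a b" "lex_gr b c"
  shows "lex_gr a c"
proof -
  obtain v1 where v1: "Poly_Mapping.lookup a v1 > Poly_Mapping.lookup b v1"
    "\<forall>w<v1. Poly_Mapping.lookup a w = Poly_Mapping.lookup b w"
    using assms(1) unfolding lex_gr_def by blast
  obtain v2 where v2: "Poly_Mapping.lookup b v2 > Poly_Mapping.lookup c v2"
    "\<forall>w<v2. Poly_Mapping.lookup b w = Poly_Mapping.lookup c w"
    using assms(2) unfolding lex_gr_def by blast
  have "Poly_Mapping.lookup a (min v1 v2) > Poly_Mapping.lookup c (min v1 v2)"
  proof (cases v1 v2 rule: linorder_cases)
    case greater
    then show ?thesis
      using v1(2)[rule_format, of v2] v2(1) by simp
  qed (use v1 v2 in \<open>auto simp: min_def\<close>)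
  moreover have "\<forall>w<min v1 v2. Poly_Mapping.lookup a w = Poly_Mapping.lookup c w"
    using v1(2) v2(2) by simp
  ultimately show ?thesis
    unfolding lex_gr_def by blast
qed

lemma lex_gr_add_right: "lex_gr a b \<Longrightarrow> lex_gr (a + c) (b + c)"
  unfolding lex_gr_def by (auto simp: lookup_add)

lemma lex_gr_add_mono:
  assumes "lex_gr a b" "d = c \<or> lex_gr c d"
  shows "lex_gr (a + c) (b + d)"
  using assms lex_gr_add_right[of a b c] lex_gr_add_right[of c d b] lex_gr_trans
  by (auto simp: add.commute)

definition lex_below :: "'k::zero mpoly \<Rightarrow> ((nat \<times> nat) \<Rightarrow>\<^sub>0 nat) \<Rightarrow> bool" where
  "lex_below f m \<longleftrightarrow> (\<forall>m' \<in> Poly_Mapping.keys f. lex_gr m m')"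

definition is_lead_term :: "'k::comm_ring_1 mpoly \<Rightarrow> ((nat \<times> nat) \<Rightarrow>\<^sub>0 nat) \<Rightarrow> 'k \<Rightarrow> bool" where
  "is_lead_term f m c \<longleftrightarrow> c \<noteq> 0 \<and> lex_below (f - Poly_Mapping.single m c) m"

lemma lex_below_add: "lex_below f m \<Longrightarrow> lex_below g m \<Longrightarrow> lex_below (f + g) m"
  unfolding lex_below_def using keys_add[of f g] by blast

lemma lex_below_sum: "(\<And>x. x \<in> A \<Longrightarrow> lex_below (f x) m) \<Longrightarrow> lex_below (sum f A) m"
proof (induction A rule: infinite_finite_induct)
  case (insert x F)
  then show ?case
    by (simp add: lex_below_add)
qed (simp_all add: lex_below_def)

lemma lex_below_single: "lex_gr m m' \<Longrightarrow> lex_below (Poly_Mapping.single m' c) m"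
  by (simp add: lex_below_def)

lemma lex_below_mult:
  fixes f g :: "'k::comm_ring_1 mpoly"
  assumes "lex_below f m1" "\<forall>b \<in> Poly_Mapping.keys g. b = m2 \<or> lex_gr m2 b"
  shows "lex_below (f * g) (m1 + m2)"
  unfolding lex_below_def
proof
  fix m' assume "m' \<in> Poly_Mapping.keys (f * g)"
  then obtain a b where "m' = a + b" "a \<in> Poly_Mapping.keys f" "b \<in> Poly_Mapping.keys g"
    using keys_mult[of f g] by auto
  with assms show "lex_gr (m1 + m2) m'"
    unfolding lex_below_def by (auto intro: lex_gr_add_mono)
qed

lemma is_lead_term_keys:
  assumes "is_lead_term f m c" "b \<in> Poly_Mapping.keys f"
  shows "b = m \<or> lex_gr m b"
proof (cases "b = m")
  case False
  with assms(2) have "b \<in> Poly_Mapping.keys (f - Poly_Mapping.single m c)"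
    by (simp add: in_keys_iff lookup_minus lookup_single)
  with assms(1) show ?thesis
    unfolding is_lead_term_def lex_below_def by blast
qed simp

lemma is_lead_term_lookup:
  assumes "is_lead_term f m c"
  shows "Poly_Mapping.lookup f m = c"
proof -
  have "m \<notin> Poly_Mapping.keys (f - Poly_Mapping.single m c)"
    using assms lex_gr_irrefl[of m] unfolding is_lead_term_def lex_below_def by blast
  then show ?thesis
    by (simp add: in_keys_iff lookup_minus)
qed

lemma lead_term_eqI:
  assumes "is_lead_term f m c"
  shows "lead_term f = Poly_Mapping.single m c"
proof -
  have "c \<noteq> 0"
    using assms by (simp add: is_lead_term_def)
  then have m: "m \<in> Poly_Mapping.keys f"
    by (simp add: in_keys_iff is_lead_term_lookup[OF assms])
  have "lead_monom f = m"
    unfolding lead_monom_def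
  proof (rule the_equality)
    show "m \<in> Poly_Mapping.keys f \<and> (\<forall>m' \<in> Poly_Mapping.keys f. m' \<noteq> m \<longrightarrow> lex_gr m m')"
      using m is_lead_term_keys[OF assms] by blast
  next
    fix m'
    assume m': "m' \<in> Poly_Mapping.keys f \<and> (\<forall>b \<in> Poly_Mapping.keys f. b \<noteq> m' \<longrightarrow> lex_gr m' b)"
    show "m' = m"
    proof (rule ccontr)
      assume "m' \<noteq> m"
      then have "lex_gr m' m" "lex_gr m m'"
        using m m' is_lead_term_keys[OF assms, of m'] by auto
      then show False
        using lex_gr_asym by blast
    qed
  qed
  then show ?thesis
    unfolding lead_term_def by (simp add: is_lead_term_lookup[OF assms])
qed

lemma is_lead_term_mult:
  fixes f g :: "'k::idom mpoly"
  assumes f: "is_lead_term f m1 c" and g: "is_lead_term g m2 d"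
  shows "is_lead_term (f * g) (m1 + m2) (c * d)"
proof -
  let ?s1 = "Poly_Mapping.single m1 c" and ?s2 = "Poly_Mapping.single m2 d"
  have "f * g - ?s1 * ?s2 = (f - ?s1) * g + (g - ?s2) * ?s1"
    by (simp add: algebra_simps)
  then have split: "f * g - Poly_Mapping.single (m1 + m2) (c * d) = (f - ?s1) * g + (g - ?s2) * ?s1"
    by (simp only: mult_single)
  have "lex_below ((f - ?s1) * g) (m1 + m2)"
    using f is_lead_term_keys[OF g] unfolding is_lead_term_def by (blast intro: lex_below_mult)
  moreover have "lex_below ((g - ?s2) * ?s1) (m2 + m1)"
    using g by (intro lex_below_mult) (simp_all add: is_lead_term_def)
  moreover have "c * d \<noteq> 0"
    using f g by (simp add: is_lead_term_def)
  ultimately show ?thesis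
    unfolding is_lead_term_def split by (simp add: lex_below_add add.commute)
qed

lemma is_lead_term_prod:
  fixes f :: "'a \<Rightarrow> 'k::idom mpoly"
  assumes "\<And>x. x \<in> A \<Longrightarrow> is_lead_term (f x) (m x) (c x)"
  shows "is_lead_term (prod f A) (sum m A) (prod c A)"
  using assms
proof (induction A rule: infinite_finite_induct)
  case (insert x F)
  then show ?case
    by (simp add: is_lead_term_mult)
qed (simp_all add: is_lead_term_def lex_below_def)

lemma is_lead_term_power:
  fixes f :: "'k::idom mpoly"
  assumes "is_lead_term f m c"
  shows "is_lead_term (f ^ k) (\<Sum>_<k. m) (c ^ k)"
proof -
  have "is_lead_term (\<Prod>_<k. f) (\<Sum>_<k. m) (\<Prod>_<k. c)"
    using assms by (rule is_lead_term_prod)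
  then show ?thesis
    by simp
qed

lemma prod_single:
  "(\<Prod>x\<in>A. Poly_Mapping.single (m x) (c x) :: 'k::comm_semiring_1 mpoly)
     = Poly_Mapping.single (sum m A) (prod c A)"
  by (induction A rule: infinite_finite_induct) (simp_all add: mult_single)

text \<open>\<open>minor_entry_var s a b\<close> indexes the variable in position \<open>(a, b)\<close>, counted from \<open>0\<close>,
  of the square submatrix of \<open>X\<close> on rows \<open>s + 1, s + 2, \<dots>\<close> and columns \<open>1, 2, \<dots>\<close>;
  the minor \<open>d\<^sub>i\<close> has \<open>s = n - i\<close>.\<close>

definition minor_entry_var :: "nat \<Rightarrow> nat \<Rightarrow> nat \<Rightarrow> nat \<times> nat" where
  "minor_entry_var s a b = (min (s + 1 + a) (1 + b), max (s + 1 + a) (1 + b))"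

definition perm_monom :: "nat \<Rightarrow> nat \<Rightarrow> (nat \<Rightarrow> nat) \<Rightarrow> (nat \<times> nat) \<Rightarrow>\<^sub>0 nat" where
  "perm_monom s i \<sigma> = (\<Sum>a = 0..<i. Poly_Mapping.single (minor_entry_var s a (\<sigma> a)) 1)"

lemma dminor_leibniz:
  "(dminor n i :: 'k::comm_ring_1 mpoly) =
     (\<Sum>\<sigma> | \<sigma> permutes {0..<i}. Poly_Mapping.single (perm_monom (n - i) i \<sigma>) (of_int (sign \<sigma>)))"
  unfolding dminor_def det_def'[OF mat_carrier]
proof (intro sum.cong refl)
  fix \<sigma> assume "\<sigma> \<in> {\<sigma>. \<sigma> permutes {0..<i}}"
  then have \<sigma>: "\<sigma> a < i" if "a < i" for a
    using permutes_in_image that by fastforce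
  have "(\<Prod>a = 0..<i. mat i i (\<lambda>(a, b). symX (n - i + 1 + a) (1 + b) :: 'k mpoly) $$ (a, \<sigma> a))
      = (\<Prod>a = 0..<i. Poly_Mapping.single (Poly_Mapping.single (minor_entry_var (n - i) a (\<sigma> a)) 1) 1)"
    using \<sigma> by (intro prod.cong refl) (simp add: symX_def var_def minor_entry_var_def)
  also have "\<dots> = Poly_Mapping.single (perm_monom (n - i) i \<sigma>) 1"
    by (simp add: prod_single perm_monom_def)
  finally show "signof \<sigma> * (\<Prod>a = 0..<i. mat i i (\<lambda>(a, b). symX (n - i + 1 + a) (1 + b)) $$ (a, \<sigma> a))
      = Poly_Mapping.single (perm_monom (n - i) i \<sigma>) (of_int (sign \<sigma>) :: 'k)"
    by (simp add: single_of_int[symmetric] mult_single del: single_of_int)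
qed

lemma minor_entry_var_diag_le:
  assumes "a\<^sub>0 \<le> a" "a\<^sub>0 \<le> b"
  shows "minor_entry_var s a\<^sub>0 a\<^sub>0 \<le> minor_entry_var s a b"
    and "minor_entry_var s a b = minor_entry_var s a\<^sub>0 a\<^sub>0 \<Longrightarrow> a = a\<^sub>0 \<and> b = a\<^sub>0"
  using assms by (auto simp: minor_entry_var_def less_eq_prod_def min_def max_def split: if_splits)

lemma permutes_least_moved:
  fixes \<sigma> :: "nat \<Rightarrow> nat"
  assumes "\<sigma> permutes S" "\<sigma> \<noteq> id"
  obtains a\<^sub>0 where "a\<^sub>0 \<in> S" "\<sigma> a\<^sub>0 \<noteq> a\<^sub>0"
    "\<And>a. a < a\<^sub>0 \<Longrightarrow> \<sigma> a = a" "\<And>a. a\<^sub>0 \<le> a \<Longrightarrow> a\<^sub>0 \<le> \<sigma> a"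
proof -
  have "\<exists>a. \<sigma> a \<noteq> a"
    using assms(2) by (auto simp: fun_eq_iff)
  define a\<^sub>0 where "a\<^sub>0 = (LEAST a. \<sigma> a \<noteq> a)"
  have moved: "\<sigma> a\<^sub>0 \<noteq> a\<^sub>0"
    unfolding a\<^sub>0_def by (rule LeastI_ex) fact
  have fixed: "\<sigma> a = a" if "a < a\<^sub>0" for a
    using not_less_Least[of a "\<lambda>a. \<sigma> a \<noteq> a"] that unfolding a\<^sub>0_def by blast
  have "a\<^sub>0 \<le> \<sigma> a" if "a\<^sub>0 \<le> a" for a
  proof (rule ccontr)
    assume "\<not> a\<^sub>0 \<le> \<sigma> a"
    then have "\<sigma> (\<sigma> a) = \<sigma> a"
      by (simp add: fixed)
    then have "\<sigma> a = a"
      using permutes_inj[OF assms(1)] by (simp add: inj_eq)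
    with \<open>\<not> a\<^sub>0 \<le> \<sigma> a\<close> that show False
      by simp
  qed
  moreover have "a\<^sub>0 \<in> S"
    using moved permutes_not_in[OF assms(1)] by blast
  ultimately show ?thesis
    using that moved fixed by blast
qed

lemma lookup_perm_monom:
  "Poly_Mapping.lookup (perm_monom s i \<sigma>) w = (\<Sum>a = 0..<i. if minor_entry_var s a (\<sigma> a) = w then 1 else 0)"
  unfolding perm_monom_def lookup_sum by (intro sum.cong) (auto simp: lookup_single when_def)

lemma perm_monom_lex_less:
  assumes "\<sigma> permutes {0..<i}" "\<sigma> \<noteq> id"
  shows "lex_gr (perm_monom s i id) (perm_monom s i \<sigma>)"
proof -
  obtain a\<^sub>0 where "a\<^sub>0 < i" and moved: "\<sigma> a\<^sub>0 \<noteq> a\<^sub>0" and fixed: "\<And>a. a < a\<^sub>0 \<Longrightarrow> \<sigma> a = a"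
    and ge: "\<And>a. a\<^sub>0 \<le> a \<Longrightarrow> a\<^sub>0 \<le> \<sigma> a"
    using permutes_least_moved[OF assms] by (metis atLeastLessThan_iff)
  define v where "v = minor_entry_var s a\<^sub>0 a\<^sub>0"
  have tail_ge: "v \<le> minor_entry_var s a (\<sigma> a)" "v \<le> minor_entry_var s a a" if "a\<^sub>0 \<le> a" for a
    using minor_entry_var_diag_le(1) ge that unfolding v_def by blast+
  have tail_ne: "minor_entry_var s a (\<sigma> a) \<noteq> v" if "a\<^sub>0 \<le> a" for a
    using minor_entry_var_diag_le(2)[of a\<^sub>0 a "\<sigma> a" s] ge[OF that] that moved unfolding v_def by auto
  have diag_eq: "minor_entry_var s a a = v \<longleftrightarrow> a = a\<^sub>0" for a
    by (auto simp: v_def minor_entry_var_def)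
  have "Poly_Mapping.lookup (perm_monom s i id) v = 1"
    using \<open>a\<^sub>0 < i\<close> by (simp add: lookup_perm_monom diag_eq)
  moreover have "Poly_Mapping.lookup (perm_monom s i \<sigma>) v = 0"
    unfolding lookup_perm_monom
    using fixed diag_eq tail_ne by (intro sum.neutral ballI) (metis not_le_imp_less less_irrefl)
  moreover have "Poly_Mapping.lookup (perm_monom s i id) w = Poly_Mapping.lookup (perm_monom s i \<sigma>) w"
    if "w < v" for w
    unfolding lookup_perm_monom
  proof (intro sum.cong refl)
    fix a
    show "(if minor_entry_var s a (id a) = w then 1 else 0)
        = (if minor_entry_var s a (\<sigma> a) = w then 1 else (0::nat))"
      using fixed[of a] tail_ge[of a] \<open>w < v\<close> by (cases "a < a\<^sub>0") auto
  qed
  ultimately show ?thesis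
    unfolding lex_gr_def by (intro exI[of _ v]) simp
qed

lemma is_lead_term_dminor: "is_lead_term (dminor n i :: 'k::idom mpoly) (perm_monom (n - i) i id) 1"
proof -
  let ?t = "\<lambda>\<sigma>. Poly_Mapping.single (perm_monom (n - i) i \<sigma>) (of_int (sign \<sigma>)) :: 'k mpoly"
  have "dminor n i = ?t id + (\<Sum>\<sigma> \<in> {\<sigma>. \<sigma> permutes {0..<i}} - {id}. ?t \<sigma>)"
    unfolding dminor_leibniz by (rule sum.remove) (simp_all add: finite_permutations permutes_id)
  moreover have "lex_below (\<Sum>\<sigma> \<in> {\<sigma>. \<sigma> permutes {0..<i}} - {id}. ?t \<sigma>) (perm_monom (n - i) i id)"
    by (intro lex_below_sum lex_below_single perm_monom_lex_less) auto
  ultimately show ?thesis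
    unfolding is_lead_term_def by (simp add: sign_id)
qed

definition upper_triangle :: "nat \<Rightarrow> (nat \<times> nat) set" where
  "upper_triangle n = {(i, j). 1 \<le> i \<and> i \<le> j \<and> j \<le> n}"

text \<open>The diagonal of \<open>d\<^sub>i\<close> consists of the variables \<open>x(a + 1, n - i + a + 1)\<close>, \<open>a < i\<close>,
  so every \<open>x\<^sub>k\<^sub>l\<close> with \<open>k \<le> l\<close> lies on the diagonal of exactly one minor, namely
  \<open>d(n + k - l)\<close>.\<close>

lemma sum_diagonals_eq_upper_triangle:
  "(\<Sum>i = 1..n. perm_monom (n - i) i id) = (\<Sum>x \<in> upper_triangle n. Poly_Mapping.single x 1)"
proof -
  define h where "h = (\<lambda>(i, a). (a + 1, n - i + a + 1))"
  have "(\<Sum>i = 1..n. perm_monom (n - i) i id)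
      = (\<Sum>i = 1..n. \<Sum>a = 0..<i. Poly_Mapping.single (h (i, a)) 1)"
    by (intro sum.cong refl) (auto simp: perm_monom_def minor_entry_var_def h_def)
  also have "\<dots> = (\<Sum>x \<in> Sigma {1..n} (\<lambda>i. {0..<i}). Poly_Mapping.single (h x) 1)"
    by (subst sum.Sigma) (auto simp: split_def)
  also have "\<dots> = (\<Sum>x \<in> upper_triangle n. Poly_Mapping.single x 1)"
  proof (rule sum.reindex_bij_betw, rule bij_betw_byWitness[where f' = "\<lambda>(k, l). (n + k - l, k - 1)"])
    show "\<forall>x \<in> Sigma {1..n} (\<lambda>i. {0..<i}). (\<lambda>(k, l). (n + k - l, k - 1)) (h x) = x"
      by (auto simp: h_def)
  qed (auto simp: h_def upper_triangle_def)
  finally show ?thesis .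
qed

lemma is_lead_term_frakD:
  "is_lead_term (frakD n :: 'k::idom mpoly) (\<Sum>x \<in> upper_triangle n. Poly_Mapping.single x 1) 1"
proof -
  have "is_lead_term (\<Prod>i = 1..n. dminor n i :: 'k mpoly) (\<Sum>i = 1..n. perm_monom (n - i) i id) (\<Prod>i = 1..n. 1)"
    by (rule is_lead_term_prod) (rule is_lead_term_dminor)
  then show ?thesis
    unfolding frakD_def sum_diagonals_eq_upper_triangle by simp
qed

lemma prod_var_upper_triangle:
  "(\<Prod>(i, j) \<in> upper_triangle n. var i j :: 'k::comm_ring_1 mpoly)
     = Poly_Mapping.single (\<Sum>x \<in> upper_triangle n. Poly_Mapping.single x 1) 1"
  by (simp add: var_def case_prod_beta prod_single)

lemma lead_term_frakD:
  "lead_term (frakD n :: 'k::idom mpoly) = (\<Prod>(i, j) \<in> upper_triangle n. var i j)"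
  by (simp add: lead_term_eqI[OF is_lead_term_frakD] prod_var_upper_triangle)

lemma lookup_sum_sum_single_le:
  "Poly_Mapping.lookup (\<Sum>_<k. \<Sum>x\<in>A. Poly_Mapping.single x (1::nat)) v \<le> k"
proof -
  have "Poly_Mapping.lookup (\<Sum>x\<in>A. Poly_Mapping.single x (1::nat)) v \<le> 1"
    by (cases "finite A") (simp_all add: lookup_sum lookup_single when_def)
  then show ?thesis
    unfolding lookup_sum[of "\<lambda>_. \<Sum>x\<in>A. Poly_Mapping.single x 1"] by simp
qed

lemma CHAR_poly_mapping [simp]: "CHAR('a::monoid_add \<Rightarrow>\<^sub>0 'b::semiring_1) = CHAR('b)"
proof (rule CHAR_eqI)
  show "of_nat CHAR('b) = (0 :: 'a \<Rightarrow>\<^sub>0 'b)"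
    by (simp flip: single_of_nat)
next
  fix x assume "of_nat x = (0 :: 'a \<Rightarrow>\<^sub>0 'b)"
  then have "(of_nat x :: 'b) = 0"
    using lookup_of_nat[of x "0 :: 'a"] by (metis lookup_zero when_simps(1))
  then show "CHAR('b) dvd x"
    by (simp add: of_nat_eq_0_iff_char_dvd)
qed

lemma module_times: "Modules.module ((*) :: 'a::comm_ring_1 \<Rightarrow> 'a \<Rightarrow> 'a)"
  by unfold_locales (simp_all add: algebra_simps)

text \<open>The monomial ideal generated by the \<open>p\<close>-th powers of all variables.\<close>

definition var_power_ideal :: "nat \<Rightarrow> 'k::zero mpoly set" where
  "var_power_ideal p = {f. \<forall>m \<in> Poly_Mapping.keys f. \<exists>v. p \<le> Poly_Mapping.lookup m v}"

lemma subspace_var_power_ideal: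
  "Modules.module.subspace ((*)) (var_power_ideal p :: 'k::comm_ring_1 mpoly set)"
proof (rule Modules.module.subspaceI[OF module_times])
  fix f g :: "'k mpoly"
  assume "f \<in> var_power_ideal p" "g \<in> var_power_ideal p"
  then show "f + g \<in> var_power_ideal p"
    using keys_add[of f g] unfolding var_power_ideal_def by blast
next
  fix r f :: "'k mpoly"
  assume f: "f \<in> var_power_ideal p"
  show "r * f \<in> var_power_ideal p"
    unfolding var_power_ideal_def mem_Collect_eq
  proof
    fix m assume "m \<in> Poly_Mapping.keys (r * f)"
    then obtain a b where m: "m = a + b" and b: "b \<in> Poly_Mapping.keys f"
      using keys_mult[of r f] by auto
    from f b obtain v where "p \<le> Poly_Mapping.lookup b v"
      unfolding var_power_ideal_def by blast
    then have "p \<le> Poly_Mapping.lookup m v"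
      unfolding m by (simp add: lookup_add)
    then show "\<exists>v. p \<le> Poly_Mapping.lookup m v"
      by blast
  qed
qed (simp add: var_power_ideal_def)

lemma var_power_mem_var_power_ideal: "var i j ^ p \<in> (var_power_ideal p :: 'k::comm_ring_1 mpoly set)"
proof -
  have "(var i j :: 'k mpoly) ^ p = Poly_Mapping.single (\<Sum>_<p. Poly_Mapping.single (i, j) 1) 1"
    using prod_single[of "\<lambda>_. Poly_Mapping.single (i, j) 1" "\<lambda>_. 1 :: 'k" "{..<p}"]
    by (simp add: var_def)
  moreover have "p \<le> Poly_Mapping.lookup (\<Sum>_<p. Poly_Mapping.single (i, j) (1::nat)) (i, j)"
    by (simp add: lookup_sum)
  ultimately show ?thesis
    unfolding var_power_ideal_def by (auto simp del: split_paired_Ex)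
qed

lemma frobenius_mem_var_power_ideal:
  fixes f :: "'k::comm_ring_1 mpoly"
  assumes "prime CHAR('k)" "V \<subseteq> {var i j | i j. True}" "f \<in> ideal_gen V"
  shows "f ^ CHAR('k) \<in> var_power_ideal CHAR('k)"
  using assms(3) unfolding ideal_gen_def
proof (rule Modules.module.span_induct_alt[OF module_times])
  show "0 ^ CHAR('k) \<in> var_power_ideal CHAR('k)"
    using prime_gt_0_nat[OF assms(1)] by (simp add: power_0_left var_power_ideal_def)
next
  fix c x y :: "'k mpoly"
  assume "x \<in> V" and y: "y ^ CHAR('k) \<in> var_power_ideal CHAR('k)"
  then obtain i j where "x = var i j"
    using assms(2) by blast
  then have "(c * x + y) ^ CHAR('k) = c ^ CHAR('k) * var i j ^ CHAR('k) + y ^ CHAR('k)"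
    using assms(1) by (simp add: freshmans_dream power_mult_distrib)
  moreover have "c ^ CHAR('k) * var i j ^ CHAR('k) \<in> var_power_ideal CHAR('k)"
    by (rule Modules.module.subspace_scale[OF module_times subspace_var_power_ideal]
        var_power_mem_var_power_ideal)+
  ultimately show "(c * x + y) ^ CHAR('k) \<in> var_power_ideal CHAR('k)"
    using Modules.module.subspace_add[OF module_times subspace_var_power_ideal] y by simp
qed

lemma frob_pow_ideal_gen_vars_subset:
  assumes "prime CHAR('k)" "V \<subseteq> {var i j | i j. True}"
  shows "frob_pow (ideal_gen V :: 'k::comm_ring_1 mpoly set) CHAR('k) \<subseteq> var_power_ideal CHAR('k)"
  unfolding frob_pow_def ideal_gen_def
  using frobenius_mem_var_power_ideal[OF assms] subspace_var_power_ideal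
  by (intro Modules.module.span_minimal[OF module_times]) (auto simp: ideal_gen_def)

lemma not_mem_var_power_ideal:
  assumes "is_lead_term f m c" "\<And>v. Poly_Mapping.lookup m v < p"
  shows "f \<notin> var_power_ideal p"
proof -
  have "m \<in> Poly_Mapping.keys f"
    using assms(1) by (simp add: in_keys_iff is_lead_term_lookup is_lead_term_def)
  then show ?thesis
    using assms(2) unfolding var_power_ideal_def by (auto simp: not_le)
qed

theorem mainTheorem3:
  fixes n :: nat
  assumes "n \<ge> 1"
  shows "lead_term (frakD n :: 'k::field mpoly) = (\<Prod>(i, j) \<in> {(i, j). 1 \<le> i \<and> i \<le> j \<and> j \<le> n}. var i j)
    \<and> (CHAR('k) > 0 \<longrightarrow> (frakD n :: 'k mpoly) ^ (CHAR('k) - 1) \<notin> frob_pow (max_ideal n) CHAR('k))"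
proof
  show "lead_term (frakD n :: 'k mpoly) = (\<Prod>(i, j) \<in> {(i, j). 1 \<le> i \<and> i \<le> j \<and> j \<le> n}. var i j)"
    using lead_term_frakD unfolding upper_triangle_def .
  show "CHAR('k) > 0 \<longrightarrow> (frakD n :: 'k mpoly) ^ (CHAR('k) - 1) \<notin> frob_pow (max_ideal n) CHAR('k)"
  proof
    assume "CHAR('k) > 0"
    then have p: "prime CHAR('k)"
      by (rule prime_CHAR_semidom)
    let ?M = "\<Sum>x \<in> upper_triangle n. Poly_Mapping.single x (1::nat)"
    have "is_lead_term ((frakD n :: 'k mpoly) ^ (CHAR('k) - 1)) (\<Sum>_<CHAR('k) - 1. ?M) 1"
      using is_lead_term_power[OF is_lead_term_frakD] by simp
    moreover have "Poly_Mapping.lookup (\<Sum>_<CHAR('k) - 1. ?M) v < CHAR('k)" for v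
      using lookup_sum_sum_single_le[where k = "CHAR('k) - 1" and A = "upper_triangle n" and v = v]
        \<open>CHAR('k) > 0\<close>
      by linarith
    ultimately have "(frakD n :: 'k mpoly) ^ (CHAR('k) - 1) \<notin> var_power_ideal CHAR('k)"
      by (rule not_mem_var_power_ideal)
    moreover have "frob_pow (max_ideal n :: 'k mpoly set) CHAR('k) \<subseteq> var_power_ideal CHAR('k)"
      unfolding max_ideal_def using p by (rule frob_pow_ideal_gen_vars_subset) blast
    ultimately show "(frakD n :: 'k mpoly) ^ (CHAR('k) - 1) \<notin> frob_pow (max_ideal n) CHAR('k)"
      by blast
  qed
qed

end
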